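(* There exist constants $c>0$ and $N_0$ such that for every $N\ge N_0$ that is a power of two there exists an interval graph $G=(V,E)$ with $|V|=N$ nodes satisfying the following. When the nodes are labeled $v_0,\dots,v_{N-1}$ in increasing order of the left endpoints of their intervals, the minimal $\pi$-OBDD representing $\chi_E$ has at least $c\,N\log N$ nodes, where $\pi$ is the $2$-interleaved variable order with decreasing significance.
   Context: An interval graph on $N$ nodes is given by intervals $[a_i,b_i]$ with $a_i<b_i$, $0\le i\le N-1$; two distinct nodes are adjacent iff their intervals intersect. Without loss of generality all $2N$ endpoints are distinct, so the left endpoints determine a unique labeling $v_0,\dots,v_{N-1}$ with $a_0<a_1<\dots<a_{N-1}$. Let $n=\lceil\log_2 N\rceil$. For $x=(x_0,\dots,x_{n-1})\in\{0,1\}^n$ put $|x|=\sum_{i=0}^{n-1}x_i2^i$. The characteristic function $\chi_E:\{0,1\}^{2n}\to\{0,1\}$ is defined by $\chi_E(x,y)=1$ iff $|x|,|y|<N$ and $\{v_{|x|},v_{|y|}\}\in E$. A $\pi$-OBDD for a variable order $\pi$ (a linear order of the input variables) is a directed acyclic rooted graph with two sinks labeled $0$ and $1$. Every inner node is labeled by a variable and has two outgoing edges labeled $0$ and $1$, and along every edge the variables respect $\pi$. An assignment determines a path from the root by following, at each node labeled $x_i$, the edge labeled by the value of $x_i$. The OBDD represents $f$ if this path always ends in the sink labeled $f(\text{assignment})$. The size of an OBDD is its number of nodes. The $2$-interleaved variable order with decreasing significance on $x,y\in\{0,1\}^n$ is $(x_{n-1},y_{n-1},x_{n-2},y_{n-2},\dots,x_0,y_0)$.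 *)

theory Defs
  imports Main "HOL-Library.Log_Nat" Complex_Main
begin

definition interval_rep :: "nat \<Rightarrow> (nat \<Rightarrow> real) \<Rightarrow> (nat \<Rightarrow> real) \<Rightarrow> bool" where
  "interval_rep N a b \<longleftrightarrow>
     (\<forall>i<N. a i < b i) \<and>
     (\<forall>i<N. \<forall>j<N. a i \<noteq> b j) \<and>
     (\<forall>i<N. \<forall>j<N. i \<noteq> j \<longrightarrow> a i \<noteq> a j \<and> b i \<noteq> b j) \<and>
     (\<forall>i<N. \<forall>j<N. i < j \<longrightarrow> a i < a j)"

definition iadj :: "(nat \<Rightarrow> real) \<Rightarrow> (nat \<Rightarrow> real) \<Rightarrow> nat \<Rightarrow> nat \<Rightarrow> bool" where
  "iadj a b i j \<longleftrightarrow> i \<noteq> j \<and> max (a i) (a j) \<le> min (b i) (b j)"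

datatype var = X nat | Y nat

definition clog :: "nat \<Rightarrow> nat" where
  "clog N = nat \<lceil>log 2 (real N)\<rceil>"

definition bitval :: "nat \<Rightarrow> (nat \<Rightarrow> bool) \<Rightarrow> nat" where
  "bitval n x = (\<Sum>i<n. if x i then 2 ^ i else 0)"

definition chiE :: "nat \<Rightarrow> (nat \<Rightarrow> real) \<Rightarrow> (nat \<Rightarrow> real) \<Rightarrow> (var \<Rightarrow> bool) \<Rightarrow> bool" where
  "chiE N a b asg =
     (let n = clog N; i = bitval n (\<lambda>k. asg (X k)); j = bitval n (\<lambda>k. asg (Y k))
      in i < N \<and> j < N \<and> iadj a b i j)"

definition interleaved_order :: "nat \<Rightarrow> var list" where
  "interleaved_order n = concat (map (\<lambda>i. [X i, Y i]) (rev [0..<n]))"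

datatype 'v node = Sink bool | Inner 'v nat nat  \<comment> \<open>variable, 0-successor, 1-successor\<close>

record 'v obdd =
  nodes :: "nat set"
  root :: nat
  lab :: "nat \<Rightarrow> 'v node"

definition before :: "'v list \<Rightarrow> 'v \<Rightarrow> 'v \<Rightarrow> bool" where
  "before \<pi> x y \<longleftrightarrow> (\<exists>i j. i < j \<and> j < length \<pi> \<and> \<pi> ! i = x \<and> \<pi> ! j = y)"

definition edge_ok :: "'v list \<Rightarrow> 'v obdd \<Rightarrow> 'v \<Rightarrow> nat \<Rightarrow> bool" where
  "edge_ok \<pi> B x w \<longleftrightarrow> w \<in> nodes B \<and>
     (case lab B w of Sink _ \<Rightarrow> True | Inner y _ _ \<Rightarrow> before \<pi> x y)"

definition is_obdd :: "'v list \<Rightarrow> 'v obdd \<Rightarrow> bool" where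
  "is_obdd \<pi> B \<longleftrightarrow>
     finite (nodes B) \<and> root B \<in> nodes B \<and>
     (\<exists>s0 s1. {v \<in> nodes B. \<exists>c. lab B v = Sink c} = {s0, s1} \<and>
              lab B s0 = Sink False \<and> lab B s1 = Sink True) \<and>
     (\<forall>v \<in> nodes B. case lab B v of
         Sink _ \<Rightarrow> True
       | Inner x l h \<Rightarrow> x \<in> set \<pi> \<and> edge_ok \<pi> B x l \<and> edge_ok \<pi> B x h)"

inductive ends_in :: "'v obdd \<Rightarrow> ('v \<Rightarrow> bool) \<Rightarrow> nat \<Rightarrow> bool \<Rightarrow> bool" for B asg where
  sink: "lab B v = Sink c \<Longrightarrow> ends_in B asg v c"
| inner: "lab B v = Inner x l h \<Longrightarrow> ends_in B asg (if asg x then h else l) c \<Longrightarrow> ends_in B asg v c"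

definition represents :: "'v obdd \<Rightarrow> (('v \<Rightarrow> bool) \<Rightarrow> bool) \<Rightarrow> bool" where
  "represents B f \<longleftrightarrow> (\<forall>asg. ends_in B asg (root B) (f asg))"

end

theory Submission
  imports Defs
begin

text \<open>Vertex \<open>u\<close> gets the interval \<open>[u, r(u) + \<epsilon>\<^sub>u]\<close> with \<open>r(u) \<ge> u\<close> integral, so for \<open>u < v\<close> the
  vertices are adjacent iff \<open>v \<le> r(u)\<close>. For \<open>u\<close> in the left half, \<open>r(u)\<close> lies in the right half and stores
  \<open>u div 4\<close> in its middle bits and, in its low bits, one of three chunks of the high part of \<open>u\<close>,
  selected by \<open>u mod 4\<close>. Fix \<open>m\<close> with \<open>n/4 < m \<le> n/2\<close>. After the OBDD has read the top \<open>n - m\<close> bits of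
  \<open>x\<close> and \<open>y\<close>, there are \<open>2 ^ (n - 3)\<close> prefix pairs leaving pairwise distinct subfunctions, all of which
  still depend on the next bit of \<open>x\<close>: the three chunks recover the prefix of \<open>x\<close>, and \<open>u div 4\<close>
  fixes the prefix of \<open>y\<close> for which the comparison \<open>v \<le> r(u)\<close> is decided in the low bits. Hence each
  of these \<open>n/4\<close> bit positions is tested by at least \<open>2 ^ (n - 3)\<close> nodes, and the OBDD has
  \<open>\<Omega>(N log N)\<close> nodes.\<close>

lemma interleaved_order_Suc: "interleaved_order (Suc n) = X n # Y n # interleaved_order n"
  by (simp add: interleaved_order_def)

lemma length_interleaved_order: "length (interleaved_order n) = 2 * n"
  by (induct n) (simp_all add: interleaved_order_Suc interleaved_order_def)

lemma nth_interleaved_order: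
  "i < 2 * n \<Longrightarrow> interleaved_order n ! i = (if even i then X (n - 1 - i div 2) else Y (n - 1 - i div 2))"
proof (induct n arbitrary: i)
  case 0
  then show ?case by simp
next
  case (Suc n)
  show ?case
  proof (cases i)
    case (Suc i1)
    show ?thesis
    proof (cases i1)
      case (Suc i2)
      then have "i2 < 2 * n" using Suc.prems \<open>i = Suc i1\<close> by simp
      then show ?thesis using Suc.hyps \<open>i = Suc i1\<close> Suc by (auto simp add: interleaved_order_Suc)
    qed (use Suc in \<open>simp add: interleaved_order_Suc\<close>)
  qed (simp add: interleaved_order_Suc)
qed

lemma set_interleaved_order: "z \<in> set (interleaved_order n) \<longleftrightarrow> (\<exists>j<n. z = X j \<or> z = Y j)"
  by (induct n) (auto simp: interleaved_order_Suc interleaved_order_def)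

definition var_rank :: "nat \<Rightarrow> var \<Rightarrow> nat" where
  "var_rank n z = (case z of X j \<Rightarrow> 2 * (n - 1 - j) | Y j \<Rightarrow> 2 * (n - 1 - j) + 1)"

lemma var_rank_nth_interleaved_order: "i < 2 * n \<Longrightarrow> var_rank n (interleaved_order n ! i) = i"
  by (auto simp: nth_interleaved_order var_rank_def)

lemma var_rank_less: "z \<in> set (interleaved_order n) \<Longrightarrow> var_rank n z < 2 * n"
  by (auto simp: set_interleaved_order var_rank_def)

lemma var_rank_div2_eq:
  "z \<in> set (interleaved_order n) \<Longrightarrow> j < n \<Longrightarrow> var_rank n z div 2 = n - 1 - j \<Longrightarrow> z = X j \<or> z = Y j"
  by (auto simp: set_interleaved_order var_rank_def)

lemma before_interleaved_order_rank_less: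
  "before (interleaved_order n) x y \<Longrightarrow> var_rank n x < var_rank n y"
  unfolding before_def
  using var_rank_nth_interleaved_order length_interleaved_order by (metis order.strict_trans)

definition node_level :: "nat \<Rightarrow> var obdd \<Rightarrow> nat \<Rightarrow> nat" where
  "node_level n B v = (case lab B v of Sink _ \<Rightarrow> 2 * n | Inner x _ _ \<Rightarrow> var_rank n x)"

definition bit_layer :: "var obdd \<Rightarrow> nat \<Rightarrow> nat set" where
  "bit_layer B j = {w \<in> nodes B. \<exists>l h. lab B w = Inner (X j) l h \<or> lab B w = Inner (Y j) l h}"

lemma obdd_successors:
  assumes "is_obdd (interleaved_order n) B" "v \<in> nodes B" "lab B v = Inner x l h"
  shows "l \<in> nodes B" "h \<in> nodes B" "node_level n B v < node_level n B l"
    "node_level n B v < node_level n B h" "node_level n B v = var_rank n x"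
    "x \<in> set (interleaved_order n)"
proof -
  have x: "x \<in> set (interleaved_order n)" and el: "edge_ok (interleaved_order n) B x l"
    and eh: "edge_ok (interleaved_order n) B x h"
    using assms unfolding is_obdd_def by (metis (no_types, lifting) node.simps(6))+
  have lv: "node_level n B v = var_rank n x" using assms(3) by (simp add: node_level_def)
  have succ: "w \<in> nodes B \<and> var_rank n x < node_level n B w" if "edge_ok (interleaved_order n) B x w" for w
  proof (cases "lab B w")
    case Sink
    then show ?thesis using that var_rank_less[OF x] by (simp add: edge_ok_def node_level_def)
  next
    case Inner
    then show ?thesis
      using that before_interleaved_order_rank_less by (simp add: edge_ok_def node_level_def)
  qed
  show "l \<in> nodes B" "h \<in> nodes B" "node_level n B v < node_level n B l"
    "node_level n B v < node_level n B h" "node_level n B v = var_rank n x"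
    "x \<in> set (interleaved_order n)"
    using succ[OF el] succ[OF eh] lv x by simp_all
qed

lemma node_level_le:
  assumes "is_obdd (interleaved_order n) B" "v \<in> nodes B"
  shows "node_level n B v \<le> 2 * n"
proof (cases "lab B v")
  case (Inner x l h)
  then show ?thesis
    using obdd_successors(5,6)[OF assms Inner] var_rank_less[of x n] by simp
qed (simp add: node_level_def)

lemma node_level_in_bit_layer:
  assumes "is_obdd (interleaved_order n) B" "w \<in> nodes B" "j < n"
    and "node_level n B w div 2 = n - 1 - j"
  shows "w \<in> bit_layer B j"
proof (cases "lab B w")
  case (Sink c)
  then show ?thesis using assms(3,4) by (simp add: node_level_def)
next
  case (Inner x l h)
  then have "x = X j \<or> x = Y j"
    using obdd_successors(5,6)[OF assms(1,2) Inner] assms(3,4) var_rank_div2_eq by metis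
  then show ?thesis using Inner assms(2) by (auto simp: bit_layer_def)
qed

lemma ends_in_unique: "ends_in B asg v c \<Longrightarrow> ends_in B asg v c' \<Longrightarrow> c = c'"
proof (induct arbitrary: c' rule: ends_in.induct)
  case (sink v c)
  from sink.prems sink.hyps show ?case by (cases rule: ends_in.cases) auto
next
  case (inner v x l h c)
  from inner.prems inner.hyps(1,3) show ?case by (cases rule: ends_in.cases) auto
qed

lemma ends_in_cong:
  assumes ob: "is_obdd (interleaved_order n) B"
  shows "ends_in B asg v c \<Longrightarrow> v \<in> nodes B \<Longrightarrow>
    \<forall>z\<in>set (interleaved_order n). node_level n B v \<le> var_rank n z \<longrightarrow> asg z = asg' z \<Longrightarrow>
    ends_in B asg' v c"
proof (induct rule: ends_in.induct)
  case (sink v c)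
  show ?case by (rule ends_in.sink[OF sink.hyps])
next
  case (inner v x l h c)
  note succ = obdd_successors[OF ob inner.prems(1) inner.hyps(1)]
  define w where "w = (if asg x then h else l)"
  have w: "w \<in> nodes B" "node_level n B v < node_level n B w" using succ(1-4) unfolding w_def by simp_all
  have "\<forall>z\<in>set (interleaved_order n). node_level n B w \<le> var_rank n z \<longrightarrow> asg z = asg' z"
  proof (intro ballI impI)
    fix z assume "z \<in> set (interleaved_order n)" "node_level n B w \<le> var_rank n z"
    then show "asg z = asg' z" using inner.prems(2) w(2) by simp
  qed
  then have "ends_in B asg' w c" by (rule inner.hyps(3)[folded w_def, OF w(1)])
  moreover have "asg x = asg' x" using inner.prems(2) succ(5,6) by simp
  ultimately show ?case unfolding w_def by (intro ends_in.inner[OF inner.hyps(1)]) simp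
qed

lemma ends_in_agree:
  assumes ob: "is_obdd (interleaved_order n) B" and "v \<in> nodes B"
    and "ends_in B asg v c" "ends_in B asg' v c'" and "k \<le> node_level n B v"
    and agree: "\<forall>z\<in>set (interleaved_order n). k \<le> var_rank n z \<longrightarrow> asg z = asg' z"
  shows "c = c'"
proof -
  have "\<forall>z\<in>set (interleaved_order n). node_level n B v \<le> var_rank n z \<longrightarrow> asg z = asg' z"
  proof (intro ballI impI)
    fix z assume "z \<in> set (interleaved_order n)" "node_level n B v \<le> var_rank n z"
    then show "asg z = asg' z" using agree \<open>k \<le> node_level n B v\<close> by simp
  qed
  with ends_in_cong[OF ob assms(3,2)] have "ends_in B asg' v c" by blast
  then show ?thesis using assms(4) by (rule ends_in_unique)
qed

inductive descends :: "nat \<Rightarrow> var obdd \<Rightarrow> (var \<Rightarrow> bool) \<Rightarrow> nat \<Rightarrow> nat \<Rightarrow> nat \<Rightarrow> bool"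
  for n B asg k where
  stop: "k \<le> node_level n B v \<Longrightarrow> descends n B asg k v v"
| step: "node_level n B v < k \<Longrightarrow> lab B v = Inner x l h \<Longrightarrow>
    descends n B asg k (if asg x then h else l) w \<Longrightarrow> descends n B asg k v w"

lemma descends_exists:
  assumes ob: "is_obdd (interleaved_order n) B" and k: "k \<le> 2 * n"
  shows "v \<in> nodes B \<Longrightarrow> \<exists>w. descends n B asg k v w \<and> w \<in> nodes B \<and> k \<le> node_level n B w"
proof (induct "2 * n - node_level n B v" arbitrary: v rule: less_induct)
  case less
  show ?case
  proof (cases "k \<le> node_level n B v")
    case True
    then show ?thesis using less.prems descends.stop[of k n B v asg] by blast
  next
    case False
    obtain x l h where lab: "lab B v = Inner x l h"
    proof (cases "lab B v")
      case Sink
      then show ?thesis using False k by (simp add: node_level_def)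
    qed
    note succ = obdd_successors[OF ob less.prems lab]
    define c where "c = (if asg x then h else l)"
    have c: "c \<in> nodes B" "node_level n B v < node_level n B c"
      using succ unfolding c_def by simp_all
    then have "2 * n - node_level n B c < 2 * n - node_level n B v"
      using node_level_le[OF ob c(1)] by linarith
    then obtain w where w: "descends n B asg k c w" "w \<in> nodes B" "k \<le> node_level n B w"
      using less.hyps c(1) by blast
    have "node_level n B v < k" using False by simp
    from descends.step[OF this lab w(1)[unfolded c_def]] w(2,3) show ?thesis by blast
  qed
qed

lemma descends_cong:
  assumes ob: "is_obdd (interleaved_order n) B"
  shows "descends n B asg k v w \<Longrightarrow> v \<in> nodes B \<Longrightarrow>
    \<forall>z\<in>set (interleaved_order n). var_rank n z < k \<longrightarrow> asg z = asg' z \<Longrightarrow> descends n B asg' k v w"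
proof (induct rule: descends.induct)
  case (stop v)
  show ?case by (rule descends.stop[OF stop.hyps])
next
  case (step v x l h w)
  note succ = obdd_successors[OF ob step.prems(1) step.hyps(2)]
  have "asg x = asg' x" using step.prems(2) succ(5,6) step.hyps(1) by simp
  moreover have "(if asg x then h else l) \<in> nodes B" using succ(1,2) by simp
  then have "descends n B asg' k (if asg x then h else l) w" using step.hyps(4) step.prems(2) by blast
  ultimately show ?case by (intro descends.step[OF step.hyps(1,2)]) simp
qed

lemma descends_ends_in: "descends n B asg k v w \<Longrightarrow> ends_in B asg v c \<Longrightarrow> ends_in B asg w c"
proof (induct rule: descends.induct)
  case (step v x l h w)
  from step.prems step.hyps(2) have "ends_in B asg (if asg x then h else l) c"
    by (cases rule: ends_in.cases) auto
  then show ?case by (rule step.hyps(4))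
qed simp

lemma obdd_cut_node:
  assumes ob: "is_obdd (interleaved_order n) B" and rep: "represents B f" and k: "k \<le> 2 * n"
  obtains w where "w \<in> nodes B" "k \<le> node_level n B w"
    "\<And>asg. \<forall>z\<in>set (interleaved_order n). var_rank n z < k \<longrightarrow> \<alpha> z = asg z \<Longrightarrow> ends_in B asg w (f asg)"
proof -
  have root: "root B \<in> nodes B" using ob unfolding is_obdd_def by blast
  obtain w where w: "descends n B \<alpha> k (root B) w" "w \<in> nodes B" "k \<le> node_level n B w"
    using descends_exists[OF ob k root] by blast
  show ?thesis
  proof (rule that[OF w(2,3)])
    fix asg
    assume "\<forall>z\<in>set (interleaved_order n). var_rank n z < k \<longrightarrow> \<alpha> z = asg z"
    then have "descends n B asg k (root B) w" by (rule descends_cong[OF ob w(1) root])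
    moreover have "ends_in B asg (root B) (f asg)" using rep unfolding represents_def ..
    ultimately show "ends_in B asg w (f asg)" by (rule descends_ends_in)
  qed
qed

definition pair_asg :: "nat \<Rightarrow> nat \<Rightarrow> var \<Rightarrow> bool" where
  "pair_asg u v z = (case z of X j \<Rightarrow> bit u j | Y j \<Rightarrow> bit v j)"

lemma bitval_bit: "bitval n (bit u) = u mod 2 ^ n"
proof (induct n)
  case 0
  then show ?case by (simp add: bitval_def)
next
  case (Suc n)
  have "bitval (Suc n) (bit u) = 2 ^ n * of_bool (bit u n) + u mod 2 ^ n"
    using Suc by (simp add: bitval_def)
  also have "\<dots> = u mod 2 ^ Suc n"
    using take_bit_Suc_from_most[of n u] by (simp only: take_bit_eq_mod)
  finally show ?case .
qed

lemma clog_power2: "clog (2 ^ n) = n"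
  by (simp add: clog_def)

lemma chiE_pair_asg: "u < 2 ^ n \<Longrightarrow> v < 2 ^ n \<Longrightarrow> chiE (2 ^ n) a b (pair_asg u v) = iadj a b u v"
  by (simp add: chiE_def clog_power2 pair_asg_def bitval_bit Let_def)

lemma bit_eq_if_div_eq: "(u::nat) div 2 ^ m = u' div 2 ^ m \<Longrightarrow> m \<le> j \<Longrightarrow> bit u j = bit u' j"
  by (metis bit_drop_bit_eq comp_apply drop_bit_eq_div le_add_diff_inverse)

lemma bit_eq_if_mod_eq: "(u::nat) mod 2 ^ m = u' mod 2 ^ m \<Longrightarrow> j < m \<Longrightarrow> bit u j = bit u' j"
  by (metis bit_take_bit_iff take_bit_eq_mod)

lemma pair_asg_agree_high:
  assumes "u div 2 ^ m = u' div 2 ^ m" "v div 2 ^ m = v' div 2 ^ m"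
  shows "\<forall>z\<in>set (interleaved_order n). var_rank n z < 2 * (n - m) \<longrightarrow> pair_asg u v z = pair_asg u' v' z"
proof (intro ballI impI)
  fix z assume z: "z \<in> set (interleaved_order n)" "var_rank n z < 2 * (n - m)"
  then obtain j where j: "z = X j \<or> z = Y j" "m \<le> j" by (auto simp: set_interleaved_order var_rank_def)
  then show "pair_asg u v z = pair_asg u' v' z"
    using bit_eq_if_div_eq[OF assms(1)] bit_eq_if_div_eq[OF assms(2)] by (auto simp: pair_asg_def)
qed

lemma pair_asg_agree_low:
  assumes "u mod 2 ^ m = u' mod 2 ^ m" "v mod 2 ^ m = v' mod 2 ^ m" "m \<le> n"
  shows "\<forall>z\<in>set (interleaved_order n). 2 * (n - m) \<le> var_rank n z \<longrightarrow> pair_asg u v z = pair_asg u' v' z"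
proof (intro ballI impI)
  fix z assume z: "z \<in> set (interleaved_order n)" "2 * (n - m) \<le> var_rank n z"
  then obtain j where j: "z = X j \<or> z = Y j" "j < m"
    using assms(3) by (auto simp: set_interleaved_order var_rank_def)
  then show "pair_asg u v z = pair_asg u' v' z"
    using bit_eq_if_mod_eq[OF assms(1)] bit_eq_if_mod_eq[OF assms(2)] by (auto simp: pair_asg_def)
qed

lemma mod_power2_add:
  assumes "k \<le> m" shows "(a * 2 ^ m + x) mod 2 ^ k = x mod (2::nat) ^ k"
proof -
  have "a * 2 ^ m = 2 ^ k * (a * 2 ^ (m - k))"
    using assms by (simp add: power_add[symmetric])
  then show ?thesis by (simp only: mod_mult_self4)
qed

definition subfunction :: "((var \<Rightarrow> bool) \<Rightarrow> bool) \<Rightarrow> nat \<Rightarrow> nat \<times> nat \<Rightarrow> nat \<Rightarrow> nat \<Rightarrow> bool" where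
  "subfunction f m p x y = f (pair_asg (fst p * 2 ^ m + x) (snd p * 2 ^ m + y))"

definition computes_subfunction ::
  "nat \<Rightarrow> var obdd \<Rightarrow> ((var \<Rightarrow> bool) \<Rightarrow> bool) \<Rightarrow> nat \<Rightarrow> nat \<times> nat \<Rightarrow> nat \<Rightarrow> bool" where
  "computes_subfunction n B f m p w \<longleftrightarrow> w \<in> nodes B \<and> 2 * (n - m) \<le> node_level n B w \<and>
     (\<forall>x<2 ^ m. \<forall>y<2 ^ m.
        ends_in B (pair_asg (fst p * 2 ^ m + x) (snd p * 2 ^ m + y)) w (subfunction f m p x y))"

lemma ex_computes_subfunction:
  assumes ob: "is_obdd (interleaved_order n) B" and rep: "represents B f"
  shows "\<exists>w. computes_subfunction n B f m p w"
proof -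
  obtain w where w: "w \<in> nodes B" "2 * (n - m) \<le> node_level n B w"
    and cut: "\<And>asg. \<forall>z\<in>set (interleaved_order n). var_rank n z < 2 * (n - m) \<longrightarrow>
               pair_asg (fst p * 2 ^ m) (snd p * 2 ^ m) z = asg z \<Longrightarrow> ends_in B asg w (f asg)"
    by (rule obdd_cut_node[OF ob rep, of "2 * (n - m)" "pair_asg (fst p * 2 ^ m) (snd p * 2 ^ m)"])
      simp_all
  have "ends_in B (pair_asg (fst p * 2 ^ m + x) (snd p * 2 ^ m + y)) w (subfunction f m p x y)"
    if "x < 2 ^ m" "y < 2 ^ m" for x y
    unfolding subfunction_def by (rule cut, rule pair_asg_agree_high) (use that in simp_all)
  then show ?thesis using w unfolding computes_subfunction_def by blast
qed

text \<open>Levels \<open>2 * (n - m)\<close> and \<open>2 * (n - m) + 1\<close> hold \<open>X (m - 1)\<close> and \<open>Y (m - 1)\<close>; a node below them no longer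
  sees bit \<open>m - 1\<close> of \<open>x\<close>.\<close>
lemma computes_subfunction_level_le:
  assumes ob: "is_obdd (interleaved_order n) B" and w: "computes_subfunction n B f m p w"
    and m: "1 \<le> m" "m \<le> n" and xy: "x < 2 ^ m" "x' < 2 ^ m" "y < 2 ^ m"
    and low: "x mod 2 ^ (m - 1) = x' mod 2 ^ (m - 1)"
    and differ: "subfunction f m p x y \<noteq> subfunction f m p x' y"
  shows "node_level n B w \<le> 2 * (n - m) + 1"
proof (rule ccontr)
  assume "\<not> ?thesis"
  then have above: "2 * (n - (m - 1)) \<le> node_level n B w" using m by linarith
  have "(fst p * 2 ^ m + x) mod 2 ^ (m - 1) = (fst p * 2 ^ m + x') mod 2 ^ (m - 1)"
    using low by (simp add: mod_power2_add)
  then have "\<forall>z\<in>set (interleaved_order n). 2 * (n - (m - 1)) \<le> var_rank n z \<longrightarrow>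
      pair_asg (fst p * 2 ^ m + x) (snd p * 2 ^ m + y) z = pair_asg (fst p * 2 ^ m + x') (snd p * 2 ^ m + y) z"
    using m by (intro pair_asg_agree_low) simp_all
  moreover have "w \<in> nodes B" and ends: "\<forall>x<2 ^ m. \<forall>y<2 ^ m.
      ends_in B (pair_asg (fst p * 2 ^ m + x) (snd p * 2 ^ m + y)) w (subfunction f m p x y)"
    using w unfolding computes_subfunction_def by simp_all
  ultimately have "subfunction f m p x y = subfunction f m p x' y"
    using ends_in_agree[OF ob _ ends[rule_format, OF xy(1,3)] ends[rule_format, OF xy(2,3)] above] by blast
  then show False using differ by contradiction
qed

lemma computes_subfunction_same_node:
  assumes ob: "is_obdd (interleaved_order n) B" and "m \<le> n"
    and p: "computes_subfunction n B f m p w" and q: "computes_subfunction n B f m q w"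
    and xy: "x < 2 ^ m" "y < 2 ^ m"
  shows "subfunction f m p x y = subfunction f m q x y"
proof -
  have "\<forall>z\<in>set (interleaved_order n). 2 * (n - m) \<le> var_rank n z \<longrightarrow>
      pair_asg (fst p * 2 ^ m + x) (snd p * 2 ^ m + y) z = pair_asg (fst q * 2 ^ m + x) (snd q * 2 ^ m + y) z"
    using \<open>m \<le> n\<close> by (intro pair_asg_agree_low) simp_all
  moreover have "w \<in> nodes B"
    and "ends_in B (pair_asg (fst p * 2 ^ m + x) (snd p * 2 ^ m + y)) w (subfunction f m p x y)"
    and "ends_in B (pair_asg (fst q * 2 ^ m + x) (snd q * 2 ^ m + y)) w (subfunction f m q x y)"
    and "2 * (n - m) \<le> node_level n B w"
    using p q xy unfolding computes_subfunction_def by simp_all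
  ultimately show ?thesis using ends_in_agree[OF ob] by blast
qed

lemma card_le_bit_layer:
  assumes ob: "is_obdd (interleaved_order n) B" and rep: "represents B f" and m: "1 \<le> m" "m \<le> n"
    and distinct: "\<And>p q. p \<in> I \<Longrightarrow> q \<in> I \<Longrightarrow>
      \<forall>x<2 ^ m. \<forall>y<2 ^ m. subfunction f m p x y = subfunction f m q x y \<Longrightarrow> p = q"
    and depends: "\<And>p. p \<in> I \<Longrightarrow> \<exists>x<2 ^ m. \<exists>x'<2 ^ m. \<exists>y<2 ^ m.
      x mod 2 ^ (m - 1) = x' mod 2 ^ (m - 1) \<and> subfunction f m p x y \<noteq> subfunction f m p x' y"
  shows "card I \<le> card (bit_layer B (m - 1))"
proof -
  obtain node where node: "\<And>p. computes_subfunction n B f m p (node p)"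
    using ex_computes_subfunction[OF ob rep] by metis
  have "node ` I \<subseteq> bit_layer B (m - 1)"
  proof
    fix w assume "w \<in> node ` I"
    then obtain p where p: "p \<in> I" "w = node p" by blast
    have "node_level n B w \<le> 2 * (n - m) + 1"
      using depends[OF p(1)] computes_subfunction_level_le[OF ob node m] p(2) by blast
    moreover have "w \<in> nodes B" "2 * (n - m) \<le> node_level n B w"
      using node[of p] p(2) unfolding computes_subfunction_def by simp_all
    ultimately show "w \<in> bit_layer B (m - 1)"
      using m by (intro node_level_in_bit_layer[OF ob]) auto
  qed
  moreover have "inj_on node I"
  proof (rule inj_onI)
    fix p q assume pq: "p \<in> I" "q \<in> I" and same: "node p = node q"
    have "computes_subfunction n B f m q (node p)" using node[of q] same by simp
    then have "\<forall>x<2 ^ m. \<forall>y<2 ^ m. subfunction f m p x y = subfunction f m q x y"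
      using computes_subfunction_same_node[OF ob m(2) node[of p]] by simp
    then show "p = q" by (rule distinct[OF pq])
  qed
  moreover have "finite (bit_layer B (m - 1))"
    using ob unfolding is_obdd_def bit_layer_def by simp
  ultimately show ?thesis by (intro card_inj_on_le)
qed

definition quarter :: "nat \<Rightarrow> nat" where
  "quarter n = n div 4"

definition chunk_code :: "nat \<Rightarrow> nat \<Rightarrow> nat" where
  "chunk_code n u = (if u mod 4 = 0 then 0
     else (u div 2 ^ (quarter n + 1) div 2 ^ ((u mod 4 - 1) * (quarter n + 1))) mod 2 ^ (quarter n + 1))"

definition right_end :: "nat \<Rightarrow> nat \<Rightarrow> nat" where
  "right_end n u = (if u < 2 ^ (n - 1)
     then 2 ^ (n - 1) + 2 ^ (2 * quarter n) * ((u div 4) mod 2 ^ (2 * quarter n - 2)) + chunk_code n u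
     else u)"

text \<open>The fractional offsets make all right endpoints distinct and different from the integral left endpoints.\<close>
definition right_pt :: "nat \<Rightarrow> nat \<Rightarrow> real" where
  "right_pt n i = real (right_end n i) + real (i + 1) / real (2 ^ n + 1)"

lemma chunk_code_less: "chunk_code n u < 2 ^ (quarter n + 1)"
  by (simp add: chunk_code_def)

lemma right_end_ge: "u \<le> right_end n u"
  by (simp add: right_end_def)

lemma power2_pred_double: "0 < n \<Longrightarrow> (2::nat) ^ n = 2 ^ (n - 1) + 2 ^ (n - 1)"
  by (metis Suc_diff_1 mult_2 power_Suc)

lemma offset_bounds: "i < N \<Longrightarrow> 0 < real (i + 1) / real (N + 1) \<and> real (i + 1) / real (N + 1) < 1"
  by (simp add: divide_less_eq)

lemma le_if_real_less_plus_one: "real (a::nat) < real b + 1 \<Longrightarrow> a \<le> b"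
proof -
  assume "real a < real b + 1"
  then have "real a < real (b + 1)" by simp
  then show "a \<le> b" by (simp only: of_nat_less_iff)
qed

lemma interval_rep_right_pt:
  assumes "8 \<le> n"
  shows "interval_rep (2 ^ n) real (right_pt n)"
  unfolding interval_rep_def
proof (intro conjI allI impI)
  fix i assume i: "i < (2::nat) ^ n"
  show "real i < right_pt n i"
    using right_end_ge[of i n] offset_bounds[OF i] unfolding right_pt_def by linarith
next
  fix i j assume i: "i < (2::nat) ^ n" and j: "j < (2::nat) ^ n"
  show "real i \<noteq> right_pt n j"
  proof
    assume e: "real i = right_pt n j"
    have "real (right_end n j) < real i" "real i < real (right_end n j) + 1"
      using e offset_bounds[OF j] unfolding right_pt_def by linarith+
    then show False using le_if_real_less_plus_one[of i "right_end n j"] by simp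
  qed
next
  fix i j assume i: "i < (2::nat) ^ n" and j: "j < (2::nat) ^ n" and ij: "i \<noteq> j"
  show "real i \<noteq> real j" using ij by simp
  show "right_pt n i \<noteq> right_pt n j"
  proof
    assume e: "right_pt n i = right_pt n j"
    have "real (right_end n i) < real (right_end n j) + 1" "real (right_end n j) < real (right_end n i) + 1"
      using e offset_bounds[OF i] offset_bounds[OF j] unfolding right_pt_def by linarith+
    then have "right_end n i = right_end n j"
      using le_if_real_less_plus_one by (simp add: le_antisym)
    then have "real (i + 1) / real (2 ^ n + 1) = real (j + 1) / real (2 ^ n + 1)"
      using e unfolding right_pt_def by simp
    moreover have "real (2 ^ n + 1) \<noteq> 0" by (simp only: of_nat_eq_0_iff)
    ultimately have "real (i + 1) = real (j + 1)" by (simp only: divide_cancel_right) blast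
    then show False using ij by simp
  qed
next
  fix i j assume "i < (2::nat) ^ n" "j < (2::nat) ^ n" "i < j"
  then show "real i < real j" by simp
qed

lemma iadj_right_pt_iff:
  assumes "u < v" "v < 2 ^ n"
  shows "iadj real (right_pt n) u v \<longleftrightarrow> v \<le> right_end n u"
proof -
  have fu: "0 < real (u + 1) / real (2 ^ n + 1)" "real (u + 1) / real (2 ^ n + 1) < 1"
    using offset_bounds[of u "2 ^ n"] assms by auto
  have "real v \<le> right_pt n v"
    using right_end_ge[of v n] offset_bounds[OF assms(2)] unfolding right_pt_def by linarith
  then have "iadj real (right_pt n) u v \<longleftrightarrow> real v \<le> right_pt n u"
    using assms(1) unfolding iadj_def by (auto simp: max_def min_def)
  also have "\<dots> \<longleftrightarrow> v \<le> right_end n u"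
  proof
    assume "real v \<le> right_pt n u"
    then show "v \<le> right_end n u"
      using fu le_if_real_less_plus_one[of v "right_end n u"] unfolding right_pt_def by linarith
  next
    assume "v \<le> right_end n u"
    then show "real v \<le> right_pt n u" using fu unfolding right_pt_def by simp
  qed
  finally show ?thesis .
qed

text \<open>For a block size \<open>m\<close>, the left half is cut into blocks \<open>P * 2 ^ m + x\<close>; within a block, the positions
  \<open>4 * s + k\<close> with \<open>k \<in> {1, 2, 3}\<close> carry in their right ends the three chunks of the high part of \<open>P * 2 ^ (m - 2) + s\<close>,
  and \<open>partner_prefix n m P s\<close> is the high part shared by all right ends in the quadruple \<open>s\<close>.\<close>
definition partner_prefix :: "nat \<Rightarrow> nat \<Rightarrow> nat \<Rightarrow> nat \<Rightarrow> nat" where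
  "partner_prefix n m P s =
     2 ^ (n - 1 - m) + 2 ^ (2 * quarter n - m) * ((P * 2 ^ (m - 2) + s) mod 2 ^ (2 * quarter n - 2))"

definition block_pairs :: "nat \<Rightarrow> nat \<Rightarrow> (nat \<times> nat) set" where
  "block_pairs n m =
     (\<lambda>(P, s). (P, partner_prefix n m P s)) ` ({..<2 ^ (n - 1 - m)} \<times> {..<2 ^ (m - 2)})"

lemma nat_eq_by_three_digits:
  fixes x y c :: nat
  assumes "x < 2 ^ (3 * c)" "y < 2 ^ (3 * c)" "x mod 2 ^ c = y mod 2 ^ c"
    "x div 2 ^ c mod 2 ^ c = y div 2 ^ c mod 2 ^ c"
    "x div 2 ^ (2 * c) mod 2 ^ c = y div 2 ^ (2 * c) mod 2 ^ c"
  shows "x = y"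
proof -
  have p: "(2::nat) ^ (3 * c) = 2 ^ (2 * c) * 2 ^ c" "(2::nat) ^ (2 * c) = 2 ^ c * 2 ^ c"
    by (simp_all add: power_add[symmetric])
  have "x div 2 ^ (2 * c) < 2 ^ c" "y div 2 ^ (2 * c) < 2 ^ c"
    using assms(1,2) p by (simp_all add: less_mult_imp_div_less)
  then have "x div 2 ^ (2 * c) = y div 2 ^ (2 * c)" using assms(5) by simp
  then have "x div 2 ^ c div 2 ^ c = y div 2 ^ c div 2 ^ c" using p by (simp add: div_mult2_eq)
  then have "x div 2 ^ c = y div 2 ^ c" using assms(4) by (metis div_mult_mod_eq)
  then show ?thesis using assms(3) by (metis div_mult_mod_eq)
qed

lemma mod_add_left_inj:
  fixes a s s' M :: nat
  assumes eq: "(a + s) mod M = (a + s') mod M" and "s < M" "s' < M"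
  shows "s = s'"
proof -
  have "s \<le> s' \<Longrightarrow> (a + s) mod M = (a + s') mod M \<Longrightarrow> s < M \<Longrightarrow> s' < M \<Longrightarrow> s = s'" for s s'
  proof -
    assume le: "s \<le> s'" and e: "(a + s) mod M = (a + s') mod M" and lt: "s < M" "s' < M"
    have "a + s \<le> a + s'" using le by simp
    then have "M dvd (a + s') - (a + s)" using mod_eq_dvd_iff_nat e by metis
    then have "M dvd s' - s" by simp
    then show "s = s'" using le lt nat_dvd_not_less[of "s' - s" M] by fastforce
  qed
  then show ?thesis using assms by (metis nat_le_linear)
qed

lemma mod_add_half_power2:
  fixes s k :: nat
  shows "(s + 2 ^ k) mod 2 ^ Suc k \<noteq> s mod 2 ^ Suc k"
    and "(s + 2 ^ k) mod 2 ^ Suc k mod 2 ^ k = s mod 2 ^ k"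
proof -
  show "(s + 2 ^ k) mod 2 ^ Suc k \<noteq> s mod 2 ^ Suc k"
  proof
    assume "(s + 2 ^ k) mod 2 ^ Suc k = s mod 2 ^ Suc k"
    then have "(s + 2 ^ k) mod 2 ^ Suc k = (s + 0) mod 2 ^ Suc k" by simp
    then have "(2::nat) ^ k = 0" by (rule mod_add_left_inj) simp_all
    then show False by simp
  qed
  show "(s + 2 ^ k) mod 2 ^ Suc k mod 2 ^ k = s mod 2 ^ k"
    by (simp add: mod_mod_cancel)
qed

context
  fixes n m :: nat
  assumes n: "8 \<le> n" and m: "quarter n + 1 \<le> m" "m \<le> 2 * quarter n"
begin

lemma quarter_bounds: "2 \<le> quarter n" "4 * quarter n \<le> n" "n \<le> 4 * quarter n + 3"
  using n unfolding quarter_def by linarith+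

lemma block_size_bounds: "3 \<le> m" "m \<le> n - 1"
  using m quarter_bounds by linarith+

lemma power2_block_size: "(2::nat) ^ m = 4 * 2 ^ (m - 2)"
proof -
  have "m = 2 + (m - 2)" using block_size_bounds by simp
  then have "(2::nat) ^ m = 2 ^ 2 * 2 ^ (m - 2)" by (metis power_add)
  then show ?thesis by simp
qed

lemma block_less: "(P::nat) < 2 ^ (n - 1 - m) \<Longrightarrow> x < 2 ^ m \<Longrightarrow> P * 2 ^ m + x < 2 ^ (n - 1)"
proof -
  assume P: "P < 2 ^ (n - 1 - m)" and x: "x < 2 ^ m"
  have "P * 2 ^ m + x < (P + 1) * 2 ^ m" using x by simp
  also have "\<dots> \<le> 2 ^ (n - 1 - m) * 2 ^ m" using P by (intro mult_le_mono1) simp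
  also have "\<dots> = 2 ^ (n - 1)" using block_size_bounds by (simp add: power_add[symmetric])
  finally show ?thesis .
qed

lemma chunk_code_less_block: "chunk_code n u < 2 ^ m"
  using chunk_code_less[of n u] power_increasing[OF m(1), of "2::nat"] by linarith

lemma quadruple_decomp:
  fixes P s k :: nat
  assumes "k < 4"
  shows "(P * 2 ^ m + 4 * s + k) mod 4 = k" "(P * 2 ^ m + 4 * s + k) div 4 = P * 2 ^ (m - 2) + s"
proof -
  have eq: "P * 2 ^ m + 4 * s + k = k + 4 * (P * 2 ^ (m - 2) + s)"
    unfolding power2_block_size by (simp add: algebra_simps)
  show "(P * 2 ^ m + 4 * s + k) mod 4 = k"
    unfolding eq mod_mult_self2 using assms by simp
  show "(P * 2 ^ m + 4 * s + k) div 4 = P * 2 ^ (m - 2) + s"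
    unfolding eq using assms by (subst div_mult_self2) simp_all
qed

lemma right_end_block:
  assumes P: "P < 2 ^ (n - 1 - m)" and s: "s < 2 ^ (m - 2)" and k: "k < 4"
  shows "right_end n (P * 2 ^ m + 4 * s + k) = 2 ^ m * partner_prefix n m P s + chunk_code n (P * 2 ^ m + 4 * s + k)"
proof -
  have "4 * s + k < 2 ^ m" using s k power2_block_size by linarith
  then have "P * 2 ^ m + 4 * s + k < 2 ^ (n - 1)" using block_less[OF P] by fastforce
  moreover have "(2::nat) ^ (n - 1) = 2 ^ m * 2 ^ (n - 1 - m)"
    using block_size_bounds by (simp add: power_add[symmetric])
  moreover have "(2::nat) ^ (2 * quarter n) = 2 ^ m * 2 ^ (2 * quarter n - m)"
    using m by (simp add: power_add[symmetric])
  ultimately show ?thesis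
    unfolding right_end_def partner_prefix_def quadruple_decomp(2)[OF k] by (simp add: algebra_simps)
qed

lemma chunk_code_quadruple_start: "chunk_code n (P * 2 ^ m + 4 * s) = 0"
  using quadruple_decomp(1)[of 0 P s] by (simp add: chunk_code_def)

lemma chunk_code_quadruple:
  assumes k: "1 \<le> k" "k < 4"
  shows "chunk_code n (P * 2 ^ m + 4 * s + k) =
    (P * 2 ^ (m - 2) + s) div 2 ^ (quarter n - 1) div 2 ^ ((k - 1) * (quarter n + 1)) mod 2 ^ (quarter n + 1)"
proof -
  have "quarter n + 1 = 2 + (quarter n - 1)" using quarter_bounds by simp
  then have "(2::nat) ^ (quarter n + 1) = 2 ^ 2 * 2 ^ (quarter n - 1)" by (metis power_add)
  then have "(2::nat) ^ (quarter n + 1) = 4 * 2 ^ (quarter n - 1)" by simp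
  then have "(P * 2 ^ m + 4 * s + k) div 2 ^ (quarter n + 1) = (P * 2 ^ m + 4 * s + k) div 4 div 2 ^ (quarter n - 1)"
    by (simp add: div_mult2_eq)
  then show ?thesis using k quadruple_decomp[OF k(2)] unfolding chunk_code_def by simp
qed

lemma partner_prefix_bounds:
  "partner_prefix n m P s * 2 ^ m + 2 ^ m \<le> 2 ^ n" "2 ^ (n - 1) \<le> partner_prefix n m P s * 2 ^ m"
proof -
  define h where "h = quarter n"
  define T where "T = (P * 2 ^ (m - 2) + s) mod 2 ^ (2 * h - 2)"
  have T: "T + 1 \<le> 2 ^ (2 * h - 2)" unfolding T_def by (simp add: Suc_leI)
  have "(2::nat) ^ (n - 1) = 2 ^ m * 2 ^ (n - 1 - m)" "(2::nat) ^ (2 * h) = 2 ^ m * 2 ^ (2 * h - m)"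
    using block_size_bounds m unfolding h_def by (simp_all add: power_add[symmetric])
  then have Q: "partner_prefix n m P s * 2 ^ m = 2 ^ (n - 1) + 2 ^ (2 * h) * T"
    unfolding partner_prefix_def T_def h_def by (simp add: algebra_simps)
  have "2 ^ m \<le> (2::nat) ^ (2 * h)" using m unfolding h_def by (simp add: power_increasing)
  then have "partner_prefix n m P s * 2 ^ m + 2 ^ m \<le> 2 ^ (n - 1) + 2 ^ (2 * h) * (T + 1)"
    unfolding Q by simp
  also have "\<dots> \<le> 2 ^ (n - 1) + 2 ^ (2 * h) * 2 ^ (2 * h - 2)" using T by (intro add_left_mono mult_le_mono2)
  also have "\<dots> = 2 ^ (n - 1) + 2 ^ (4 * h - 2)"
    using quarter_bounds unfolding h_def by (simp add: power_add[symmetric])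
  also have "\<dots> \<le> 2 ^ (n - 1) + 2 ^ (n - 1)"
    using quarter_bounds unfolding h_def by (simp add: power_increasing)
  also have "\<dots> = 2 ^ n" using power2_pred_double[of n] n by simp
  finally show "partner_prefix n m P s * 2 ^ m + 2 ^ m \<le> 2 ^ n" .
  show "2 ^ (n - 1) \<le> partner_prefix n m P s * 2 ^ m" unfolding Q by simp
qed

lemma partner_prefix_inj:
  assumes s: "s < 2 ^ (m - 2)" "s' < 2 ^ (m - 2)"
    and eq: "partner_prefix n m P s = partner_prefix n m P s'"
  shows "s = s'"
proof -
  define M where "M = (2::nat) ^ (2 * quarter n - 2)"
  have "2 ^ (m - 2) \<le> M" unfolding M_def using m by (simp add: power_increasing)
  then have sM: "s < M" "s' < M" using s by linarith+
  have "(P * 2 ^ (m - 2) + s) mod M = (P * 2 ^ (m - 2) + s') mod M"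
    using eq unfolding partner_prefix_def M_def by simp
  then show ?thesis using sM by (rule mod_add_left_inj)
qed

lemma high_part_chunks:
  fixes P s :: nat
  assumes P: "P < 2 ^ (n - 1 - m)" and s: "s < 2 ^ (m - 2)"
  shows "(P * 2 ^ (m - 2) + s) div 2 ^ (quarter n - 1) < 2 ^ (3 * (quarter n + 1))"
    and "(P * 2 ^ (m - 2) + s) div 2 ^ (quarter n - 1) div 2 ^ (m - quarter n - 1) = P"
proof -
  have "P * 2 ^ (m - 2) + s < (P + 1) * 2 ^ (m - 2)" using s by simp
  also have "\<dots> \<le> 2 ^ (n - 1 - m) * 2 ^ (m - 2)" using P by (intro mult_le_mono1) simp
  also have "\<dots> = 2 ^ (quarter n - 1) * 2 ^ (n - 2 - quarter n)"
  proof -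
    have "n - 1 - m + (m - 2) = (quarter n - 1) + (n - 2 - quarter n)"
      using m quarter_bounds block_size_bounds by arith
    then show ?thesis by (metis power_add)
  qed
  finally have "(P * 2 ^ (m - 2) + s) div 2 ^ (quarter n - 1) < 2 ^ (n - 2 - quarter n)"
    by (simp add: less_mult_imp_div_less mult.commute)
  also have "\<dots> \<le> 2 ^ (3 * (quarter n + 1))" using quarter_bounds by (simp add: power_increasing)
  finally show "(P * 2 ^ (m - 2) + s) div 2 ^ (quarter n - 1) < 2 ^ (3 * (quarter n + 1))" .
  have "(2::nat) ^ (quarter n - 1) * 2 ^ (m - quarter n - 1) = 2 ^ (m - 2)"
    using quarter_bounds m by (simp add: power_add[symmetric])
  then show "(P * 2 ^ (m - 2) + s) div 2 ^ (quarter n - 1) div 2 ^ (m - quarter n - 1) = P"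
    using s by (simp add: div_mult2_eq[symmetric])
qed

lemma chunk_codes_determine_block:
  assumes P: "P < 2 ^ (n - 1 - m)" "P' < 2 ^ (n - 1 - m)" and s: "s < 2 ^ (m - 2)"
    and eq: "\<And>k. 1 \<le> k \<Longrightarrow> k < 4 \<Longrightarrow>
      chunk_code n (P * 2 ^ m + 4 * s + k) = chunk_code n (P' * 2 ^ m + 4 * s + k)"
  shows "P = P'"
proof -
  define c where "c = quarter n + 1"
  define W where "W = (P * 2 ^ (m - 2) + s) div 2 ^ (quarter n - 1)"
  define W' where "W' = (P' * 2 ^ (m - 2) + s) div 2 ^ (quarter n - 1)"
  have digit: "W div 2 ^ ((k - 1) * c) mod 2 ^ c = W' div 2 ^ ((k - 1) * c) mod 2 ^ c"
    if "1 \<le> k" "k < 4" for k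
    using eq[OF that] chunk_code_quadruple[OF that, of P s] chunk_code_quadruple[OF that, of P' s]
    unfolding W_def W'_def c_def by simp
  have "W = W'"
  proof (rule nat_eq_by_three_digits)
    show "W < 2 ^ (3 * c)" "W' < 2 ^ (3 * c)"
      using high_part_chunks(1)[OF P(1) s] high_part_chunks(1)[OF P(2) s] unfolding W_def W'_def c_def by simp_all
    show "W mod 2 ^ c = W' mod 2 ^ c" using digit[of 1] by simp
    show "W div 2 ^ c mod 2 ^ c = W' div 2 ^ c mod 2 ^ c" using digit[of 2] by simp
    show "W div 2 ^ (2 * c) mod 2 ^ c = W' div 2 ^ (2 * c) mod 2 ^ c" using digit[of 3] by (simp add: mult.commute)
  qed
  then show ?thesis
    using high_part_chunks(2)[OF P(1) s] high_part_chunks(2)[OF P(2) s] unfolding W_def W'_def by metis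
qed

lemma subfunction_chi:
  assumes P: "P < 2 ^ (n - 1 - m)" and xy: "x < 2 ^ m" "y < 2 ^ m"
  shows "subfunction (chiE (2 ^ n) real (right_pt n)) m (P, partner_prefix n m P s) x y
    \<longleftrightarrow> partner_prefix n m P s * 2 ^ m + y \<le> right_end n (P * 2 ^ m + x)"
proof -
  have u: "P * 2 ^ m + x < 2 ^ (n - 1)" by (rule block_less[OF P xy(1)])
  have v: "partner_prefix n m P s * 2 ^ m + y < 2 ^ n" "2 ^ (n - 1) \<le> partner_prefix n m P s * 2 ^ m"
    using partner_prefix_bounds[of P s] xy(2) by linarith+
  have "(2::nat) ^ (n - 1) < 2 ^ n" using n by simp
  then show ?thesis
    unfolding subfunction_def using chiE_pair_asg iadj_right_pt_iff u v by simp
qed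

lemma subfunction_chi_quadruple:
  assumes P: "P < 2 ^ (n - 1 - m)" and s: "s < 2 ^ (m - 2)" and k: "k < 4" and y: "y < 2 ^ m"
  shows "subfunction (chiE (2 ^ n) real (right_pt n)) m (P, partner_prefix n m P s) (4 * s + k) y
    \<longleftrightarrow> y \<le> chunk_code n (P * 2 ^ m + 4 * s + k)"
proof -
  have "4 * s + k < 2 ^ m" using s k power2_block_size by linarith
  then show ?thesis
    using subfunction_chi[OF P _ y] right_end_block[OF P s k] by (simp add: add.assoc)
qed

lemma block_subfunctions_distinct:
  assumes "p \<in> block_pairs n m" "q \<in> block_pairs n m"
    and eq: "\<forall>x<2 ^ m. \<forall>y<2 ^ m. subfunction (chiE (2 ^ n) real (right_pt n)) m p x y =
                                   subfunction (chiE (2 ^ n) real (right_pt n)) m q x y"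
  shows "p = q"
proof -
  obtain P s where p: "p = (P, partner_prefix n m P s)" and P: "P < 2 ^ (n - 1 - m)" and s: "s < 2 ^ (m - 2)"
    using assms(1) unfolding block_pairs_def by auto
  obtain P' s' where q: "q = (P', partner_prefix n m P' s')"
    and P': "P' < 2 ^ (n - 1 - m)" and s': "s' < 2 ^ (m - 2)"
    using assms(2) unfolding block_pairs_def by auto
  define Q where "Q = partner_prefix n m P' s"
  define Q' where "Q' = partner_prefix n m P' s'"
  have x: "4 * s < 2 ^ m" using s power2_block_size by linarith
  have y: "(0::nat) < 2 ^ m" "(1::nat) < 2 ^ m" using one_less_power[of "2::nat" m] block_size_bounds by simp_all
  have "subfunction (chiE (2 ^ n) real (right_pt n)) m q (4 * s) y \<longleftrightarrow> y = 0" if "y < 2 ^ m" for y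
    using eq that x subfunction_chi_quadruple[OF P s, of 0 y] chunk_code_quadruple_start unfolding p by simp
  moreover have "subfunction (chiE (2 ^ n) real (right_pt n)) m q (4 * s) y \<longleftrightarrow> Q' * 2 ^ m + y \<le> Q * 2 ^ m"
    if "y < 2 ^ m" for y
    using subfunction_chi[OF P' x that] right_end_block[OF P' s, of 0] chunk_code_quadruple_start
    unfolding q Q_def Q'_def by (simp add: mult.commute)
  ultimately have start: "Q' * 2 ^ m + y \<le> Q * 2 ^ m \<longleftrightarrow> y = 0" if "y < 2 ^ m" for y
    using that by blast
  have "Q' * 2 ^ m \<le> Q * 2 ^ m" "\<not> Q' * 2 ^ m + 1 \<le> Q * 2 ^ m" using start[of 0] start[of 1] y by simp_all
  then have "Q' * 2 ^ m = Q * 2 ^ m" by linarith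
  then have "Q' = Q" by simp
  then have ss: "s' = s" unfolding Q_def Q'_def by (rule partner_prefix_inj[OF s' s])
  have "chunk_code n (P * 2 ^ m + 4 * s + k) = chunk_code n (P' * 2 ^ m + 4 * s + k)"
    if k: "1 \<le> k" "k < 4" for k
  proof -
    have "4 * s + k < 2 ^ m" using s k power2_block_size by linarith
    then have "y \<le> chunk_code n (P * 2 ^ m + 4 * s + k) \<longleftrightarrow> y \<le> chunk_code n (P' * 2 ^ m + 4 * s + k)"
      if "y < 2 ^ m" for y
      using eq that subfunction_chi_quadruple[OF P s k(2) that] subfunction_chi_quadruple[OF P' s k(2) that]
      unfolding p q ss by simp
    then show ?thesis using chunk_code_less_block by (meson le_antisym order_refl)
  qed
  then have "P = P'" by (rule chunk_codes_determine_block[OF P P' s])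
  then show "p = q" using p q ss by simp
qed

text \<open>Flipping the top bit of \<open>s\<close> changes \<open>x = 4 * s\<close> only in bit \<open>m - 1\<close>, but changes the partner prefix.\<close>
lemma block_subfunction_depends:
  assumes "p \<in> block_pairs n m"
  shows "\<exists>x<2 ^ m. \<exists>x'<2 ^ m. \<exists>y<2 ^ m. x mod 2 ^ (m - 1) = x' mod 2 ^ (m - 1) \<and>
    subfunction (chiE (2 ^ n) real (right_pt n)) m p x y \<noteq> subfunction (chiE (2 ^ n) real (right_pt n)) m p x' y"
proof -
  obtain P s where p: "p = (P, partner_prefix n m P s)" and P: "P < 2 ^ (n - 1 - m)" and s: "s < 2 ^ (m - 2)"
    using assms unfolding block_pairs_def by auto
  define k where "k = m - 3"
  have "m - 2 = Suc k" "m - 1 = 2 + k" using block_size_bounds unfolding k_def by auto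
  then have k: "m - 2 = Suc k" "(2::nat) ^ (m - 1) = 4 * 2 ^ k" by (simp_all add: power_add)
  define s' where "s' = (s + 2 ^ k) mod 2 ^ (m - 2)"
  have s': "s' < 2 ^ (m - 2)" unfolding s'_def by simp
  have "s' \<noteq> s" using mod_add_half_power2(1)[of s k] s unfolding s'_def k(1) by simp
  then have "partner_prefix n m P s' \<noteq> partner_prefix n m P s" using partner_prefix_inj[OF s' s] by blast
  have "s' mod 2 ^ k = s mod 2 ^ k" using mod_add_half_power2(2)[of s k] unfolding s'_def k(1) .
  then have low: "4 * s mod 2 ^ (m - 1) = 4 * s' mod 2 ^ (m - 1)" unfolding k(2) by (simp add: mod_mult_mult1)
  have x: "4 * s < 2 ^ m" "4 * s' < 2 ^ m" using s s' power2_block_size by linarith+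
  have y: "(0::nat) < 2 ^ m" "(1::nat) < 2 ^ m" using one_less_power[of "2::nat" m] block_size_bounds by simp_all
  have at_s: "subfunction (chiE (2 ^ n) real (right_pt n)) m p (4 * s) y \<longleftrightarrow> y = 0" if "y < 2 ^ m" for y
    using subfunction_chi_quadruple[OF P s, of 0 y] chunk_code_quadruple_start that unfolding p by simp
  have at_s': "subfunction (chiE (2 ^ n) real (right_pt n)) m p (4 * s') y \<longleftrightarrow>
      partner_prefix n m P s * 2 ^ m + y \<le> partner_prefix n m P s' * 2 ^ m" if "y < 2 ^ m" for y
    using subfunction_chi[OF P x(2) that] right_end_block[OF P s', of 0] chunk_code_quadruple_start
    unfolding p by (simp add: mult.commute)
  consider "partner_prefix n m P s' < partner_prefix n m P s" | "partner_prefix n m P s < partner_prefix n m P s'"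
    using \<open>partner_prefix n m P s' \<noteq> partner_prefix n m P s\<close> by linarith
  then show ?thesis
  proof cases
    case 1
    then have "\<not> subfunction (chiE (2 ^ n) real (right_pt n)) m p (4 * s') 0" using at_s' y by simp
    then show ?thesis using at_s[of 0] x y low by metis
  next
    case 2
    then have "(partner_prefix n m P s + 1) * 2 ^ m \<le> partner_prefix n m P s' * 2 ^ m"
      by (intro mult_le_mono1) simp
    then have "subfunction (chiE (2 ^ n) real (right_pt n)) m p (4 * s') 1" using at_s' y by simp
    then show ?thesis using at_s[of 1] x y low by fastforce
  qed
qed

lemma card_block_pairs: "card (block_pairs n m) = 2 ^ (n - 3)"
proof -
  have "inj_on (\<lambda>(P, s). (P, partner_prefix n m P s)) ({..<2 ^ (n - 1 - m)} \<times> {..<2 ^ (m - 2)})"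
    using partner_prefix_inj by (auto simp: inj_on_def)
  then have "card (block_pairs n m) = 2 ^ (n - 1 - m) * 2 ^ (m - 2)"
    unfolding block_pairs_def by (simp add: card_image card_cartesian_product)
  also have "\<dots> = 2 ^ (n - 3)"
  proof -
    have "n - 1 - m + (m - 2) = n - 3" using block_size_bounds by arith
    then show ?thesis by (metis power_add)
  qed
  finally show ?thesis .
qed

lemma card_bit_layer_ge:
  assumes ob: "is_obdd (interleaved_order n) B" and rep: "represents B (chiE (2 ^ n) real (right_pt n))"
  shows "2 ^ (n - 3) \<le> card (bit_layer B (m - 1))"
proof -
  have "card (block_pairs n m) \<le> card (bit_layer B (m - 1))"
    using block_size_bounds
    by (intro card_le_bit_layer[OF ob rep _ _ block_subfunctions_distinct block_subfunction_depends]) simp_all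
  then show ?thesis unfolding card_block_pairs .
qed

end

lemma bit_layer_disjoint: "j \<noteq> j' \<Longrightarrow> bit_layer B j \<inter> bit_layer B j' = {}"
  by (auto simp: bit_layer_def)

lemma card_nodes_lower_bound:
  assumes n: "8 \<le> n" and ob: "is_obdd (interleaved_order n) B"
    and rep: "represents B (chiE (2 ^ n) real (right_pt n))"
  shows "real n * 2 ^ n \<le> 64 * real (card (nodes B))"
proof -
  define J where "J = {quarter n ..< 2 * quarter n}"
  have fin: "finite (nodes B)" using ob unfolding is_obdd_def by simp
  have sub: "bit_layer B j \<subseteq> nodes B" for j unfolding bit_layer_def by blast
  have "quarter n * 2 ^ (n - 3) = (\<Sum>j\<in>J. (2::nat) ^ (n - 3))" unfolding J_def by simp
  also have "\<dots> \<le> (\<Sum>j\<in>J. card (bit_layer B j))"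
  proof (rule sum_mono)
    fix j assume "j \<in> J"
    then have "quarter n + 1 \<le> j + 1" "j + 1 \<le> 2 * quarter n" unfolding J_def by simp_all
    then show "2 ^ (n - 3) \<le> card (bit_layer B j)" using card_bit_layer_ge[OF n _ _ ob rep, of "j + 1"] by simp
  qed
  also have "\<dots> = card (\<Union>j\<in>J. bit_layer B j)"
    using bit_layer_disjoint finite_subset[OF sub fin] unfolding J_def by (intro card_UN_disjoint[symmetric]) simp_all
  also have "\<dots> \<le> card (nodes B)" using sub by (intro card_mono[OF fin]) blast
  finally have layers: "quarter n * 2 ^ (n - 3) \<le> card (nodes B)" .
  have "n = 3 + (n - 3)" using n by simp
  then have "(2::nat) ^ n = 2 ^ 3 * 2 ^ (n - 3)" by (metis power_add)
  then have "n * 2 ^ n = 8 * (n * 2 ^ (n - 3))" by simp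
  also have "\<dots> \<le> 8 * (8 * quarter n * 2 ^ (n - 3))"
    using n unfolding quarter_def by (intro mult_le_mono2 mult_le_mono1) linarith
  also have "\<dots> \<le> 64 * card (nodes B)" using layers by simp
  finally have "real (n * 2 ^ n) \<le> real (64 * card (nodes B))" by (simp only: of_nat_le_iff)
  then show ?thesis by simp
qed

theorem mainTheorem3:
  shows "\<exists>c::real. c > 0 \<and> (\<exists>N0::nat. \<forall>N k. N = 2 ^ k \<and> N \<ge> N0 \<longrightarrow>
           (\<exists>a b. interval_rep N a b \<and>
              (\<forall>B::(var obdd). is_obdd (interleaved_order (clog N)) B \<and> represents B (chiE N a b)
                   \<longrightarrow> real (card (nodes B)) \<ge> c * real N * log 2 (real N))))"
proof (intro exI[of _ "1/64"] conjI exI[of _ "256"] allI impI)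
  fix N k :: nat
  assume "N = 2 ^ k \<and> 256 \<le> N"
  then have N: "N = 2 ^ k" and "(2::nat) ^ 8 \<le> 2 ^ k" by simp_all
  then have k: "8 \<le> k" by (simp only: power_increasing_iff)
  show "\<exists>a b. interval_rep N a b \<and> (\<forall>B. is_obdd (interleaved_order (clog N)) B \<and> represents B (chiE N a b)
          \<longrightarrow> 1/64 * real N * log 2 (real N) \<le> real (card (nodes B)))"
  proof (rule exI[of _ real], rule exI[of _ "right_pt k"], intro conjI allI impI)
    show "interval_rep N real (right_pt k)" unfolding N by (rule interval_rep_right_pt[OF k])
    fix B :: "var obdd"
    assume "is_obdd (interleaved_order (clog N)) B \<and> represents B (chiE N real (right_pt k))"
    then have "real k * 2 ^ k \<le> 64 * real (card (nodes B))"
      unfolding N clog_power2 by (intro card_nodes_lower_bound[OF k]) simp_all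
    then show "1/64 * real N * log 2 (real N) \<le> real (card (nodes B))"
      unfolding N by (simp add: algebra_simps)
  qed
qed (simp)

end
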